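(* If $\mathbf{Y}_1\sim\mathcal{MMN}_p(\boldsymbol{\xi},\mathbf{\Omega},\boldsymbol{\delta};H)$ and $\mathbf{Y}_2\sim\mathcal{N}_p(\boldsymbol{\mu},\mathbf{\Sigma})$ are independent, then $\mathbf{Y}=\mathbf{Y}_1+\mathbf{Y}_2\sim\mathcal{MMN}_p(\boldsymbol{\xi}_{\mathbf{Y}},\mathbf{\Omega}_{\mathbf{Y}},\boldsymbol{\delta}_{\mathbf{Y}};H)$, where $\boldsymbol{\xi}_{\mathbf{Y}}=\boldsymbol{\xi}+\boldsymbol{\mu}$, $\mathbf{\Omega}_{\mathbf{Y}}=\mathbf{\Omega}+\mathbf{\Sigma}$, and $\boldsymbol{\delta}_{\mathbf{Y}}=\boldsymbol{\omega}_{\mathbf{Y}}^{-1}\boldsymbol{\omega}\boldsymbol{\delta}$, with $\boldsymbol{\omega}_{\mathbf{Y}}=(\mathbf{\Omega}_{\mathbf{Y}}\odot\mathbf{I}_p)^{1/2}$.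
   Context: Let $p\ge1$, $\boldsymbol{\xi}\in\mathbb{R}^p$, $\mathbf{\Omega}$ a $p\times p$ symmetric positive definite matrix, $\boldsymbol{\omega}=(\mathbf{\Omega}\odot\mathbf{I}_p)^{1/2}=\mathrm{diag}(\mathbf{\Omega}_{11}^{1/2},\dots,\mathbf{\Omega}_{pp}^{1/2})$ ($\odot$ is the entrywise/Hadamard product), $\overline{\mathbf{\Omega}}=\boldsymbol{\omega}^{-1}\mathbf{\Omega}\boldsymbol{\omega}^{-1}$, and $\boldsymbol{\delta}\in\mathbb{R}^p$ with $\overline{\mathbf{\Omega}}-\boldsymbol{\delta}\boldsymbol{\delta}^\top$ positive definite. For a real random variable $U$ with CDF $H$ and $\mathbf{Z}\sim\mathcal{N}_p(\mathbf{0},\overline{\mathbf{\Omega}}-\boldsymbol{\delta}\boldsymbol{\delta}^\top)$ independent of $U$, $\boldsymbol{\xi}+\boldsymbol{\omega}(\boldsymbol{\delta}U+\mathbf{Z})$ is said to have distribution $\mathcal{MMN}_p(\boldsymbol{\xi},\mathbf{\Omega},\boldsymbol{\delta};H)$. $\boldsymbol{\mu}\in\mathbb{R}^p$ and $\mathbf{\Sigma}$ is a $p\times p$ covariance matrix. *)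

theory Defs
  imports "HOL-Probability.Probability"
begin

definition hadamard :: "real^'n^'m \<Rightarrow> real^'n^'m \<Rightarrow> real^'n^'m" (infixl "\<odot>" 70) where
  "A \<odot> B = (\<chi> i j. A $ i $ j * B $ i $ j)"

definition sym_matrix :: "real^'n^'n \<Rightarrow> bool" where
  "sym_matrix A \<longleftrightarrow> transpose A = A"

definition pos_def :: "real^'n^'n \<Rightarrow> bool" where
  "pos_def A \<longleftrightarrow> sym_matrix A \<and> (\<forall>x. x \<noteq> 0 \<longrightarrow> x \<bullet> (A *v x) > 0)"

definition pos_semidef :: "real^'n^'n \<Rightarrow> bool" where
  "pos_semidef A \<longleftrightarrow> sym_matrix A \<and> (\<forall>x. x \<bullet> (A *v x) \<ge> 0)"

text \<open>Square root of the diagonal matrix \<open>\<Omega> \<odot> I\<close>: entrywise square root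
  (which is the principal square root of a nonnegative diagonal matrix).\<close>
definition omega_of :: "real^'n^'n \<Rightarrow> real^'n^'n" where
  "omega_of \<Omega> = (\<chi> i j. sqrt ((\<Omega> \<odot> mat 1) $ i $ j))"

definition Omega_bar :: "real^'n^'n \<Rightarrow> real^'n^'n" where
  "Omega_bar \<Omega> = matrix_inv (omega_of \<Omega>) ** \<Omega> ** matrix_inv (omega_of \<Omega>)"

definition outer :: "real^'n \<Rightarrow> real^'n \<Rightarrow> real^'n^'n" where
  "outer a b = (\<chi> i j. a $ i * b $ j)"

definition normal_rv :: "'a measure \<Rightarrow> ('a \<Rightarrow> real) \<Rightarrow> real \<Rightarrow> real \<Rightarrow> bool" where
  "normal_rv M X m v \<longleftrightarrow>
     X \<in> borel_measurable M \<and>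
     ((v > 0 \<and> distributed M lborel X (\<lambda>x. ennreal (normal_density m (sqrt v) x))) \<or>
      (v = 0 \<and> (AE x in M. X x = m)))"

definition gaussian_law :: "(real^'n) measure \<Rightarrow> real^'n \<Rightarrow> real^'n^'n \<Rightarrow> bool" where
  "gaussian_law Q \<mu> \<Sigma> \<longleftrightarrow> prob_space Q \<and> sets Q = sets borel \<and>
     (\<forall>t. normal_rv Q (\<lambda>x. t \<bullet> x) (t \<bullet> \<mu>) (t \<bullet> (\<Sigma> *v t)))"

definition is_normal_vec :: "'a measure \<Rightarrow> ('a \<Rightarrow> real^'n) \<Rightarrow> real^'n \<Rightarrow> real^'n^'n \<Rightarrow> bool" where
  "is_normal_vec M Y \<mu> \<Sigma> \<longleftrightarrow> Y \<in> borel_measurable M \<and> gaussian_law (distr M borel Y) \<mu> \<Sigma>"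

text \<open>\<open>Y \<sim> MMN_p(\<xi>,\<Omega>,\<delta>;H)\<close>: Y has the law of \<open>\<xi> + \<omega>(\<delta> U + Z)\<close> with U (CDF H)
  and \<open>Z \<sim> N_p(0, \<Omega>bar - \<delta>\<delta>^T)\<close> independent, i.e. the image of the product law.\<close>
definition is_MMN :: "'a measure \<Rightarrow> ('a \<Rightarrow> real^'n) \<Rightarrow> real^'n \<Rightarrow> real^'n^'n \<Rightarrow> real^'n
                      \<Rightarrow> (real \<Rightarrow> real) \<Rightarrow> bool" where
  "is_MMN M Y \<xi> \<Omega> \<delta> H \<longleftrightarrow>
     pos_def \<Omega> \<and> pos_def (Omega_bar \<Omega> - outer \<delta> \<delta>) \<and>
     Y \<in> borel_measurable M \<and>
     (\<exists>L Q. prob_space L \<and> sets L = sets borel \<and> cdf L = H \<and>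
            gaussian_law Q 0 (Omega_bar \<Omega> - outer \<delta> \<delta>) \<and>
            distr M borel Y =
              distr (L \<Otimes>\<^sub>M Q) borel (\<lambda>(u, z). \<xi> + omega_of \<Omega> *v (u *\<^sub>R \<delta> + z)))"

end

theory Submission
  imports Defs
begin

(* Realise Y1 as \<xi> + \<omega> (\<delta> U + Z) with U, Z, Y2 independent, and put
   W = \<omega>_Y^-1 (\<omega> Z + Y2 - \<mu>).  Then Y1 + Y2 = \<xi> + \<mu> + \<omega>_Y (\<delta>_Y U + W), W is independent
   of U, and as an affine image of the independent Gaussian pair (Z, Y2) it is Gaussian with
   mean 0 and covariance \<omega>_Y^-1 (\<omega> (\<Omega>bar - \<delta> \<delta>^T) \<omega> + \<Sigma>) \<omega>_Y^-1 = \<Omega>bar_Y - \<delta>_Y \<delta>_Y^T,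
   which is positive definite because \<omega>_Y^-1 \<omega> is invertible.  On the level of laws this
   amounts to regrouping (L \<Otimes> Q) \<Otimes> P as L \<Otimes> (Q \<Otimes> P), where L, Q, P are the laws of U, Z, Y2. *)

lemma (in prob_space) distr_pair_snd:
  assumes "sigma_finite_measure N"
  shows "distr (M \<Otimes>\<^sub>M N) N snd = N"
proof (intro measure_eqI)
  interpret N: sigma_finite_measure N by fact
  fix A assume A: "A \<in> sets (distr (M \<Otimes>\<^sub>M N) N snd)"
  then have "emeasure (distr (M \<Otimes>\<^sub>M N) N snd) A = emeasure (M \<Otimes>\<^sub>M N) (space M \<times> A)"
    by (auto simp: emeasure_distr space_pair_measure dest: sets.sets_into_space
             intro!: arg_cong2[where f=emeasure])
  with A show "emeasure (distr (M \<Otimes>\<^sub>M N) N snd) A = emeasure N A"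
    by (simp add: N.emeasure_pair_measure_Times emeasure_space_1)
qed simp

lemma pair_measure_assoc:
  assumes "sigma_finite_measure M1" "sigma_finite_measure M2" "sigma_finite_measure M3"
  shows "M1 \<Otimes>\<^sub>M (M2 \<Otimes>\<^sub>M M3) =
    distr ((M1 \<Otimes>\<^sub>M M2) \<Otimes>\<^sub>M M3) (M1 \<Otimes>\<^sub>M (M2 \<Otimes>\<^sub>M M3)) (\<lambda>((x, y), z). (x, (y, z)))"
    (is "_ = distr ?M123 ?M1_23 ?assoc")
proof (rule measure_eqI)
  interpret M2: sigma_finite_measure M2 by fact
  interpret M3: sigma_finite_measure M3 by fact
  interpret M23: pair_sigma_finite M2 M3 by unfold_locales
  have assoc: "?assoc \<in> ?M123 \<rightarrow>\<^sub>M ?M1_23"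
    by (simp add: case_prod_beta')
  fix A assume A: "A \<in> sets ?M1_23"
  have A': "?assoc -` A \<inter> space ?M123 \<in> sets ?M123"
    using assoc A by (rule measurable_sets)
  have "emeasure ?M1_23 A = (\<integral>\<^sup>+x. emeasure (M2 \<Otimes>\<^sub>M M3) (Pair x -` A) \<partial>M1)"
    using A by (rule M23.emeasure_pair_measure_alt)
  also have "\<dots> = (\<integral>\<^sup>+x. \<integral>\<^sup>+y. emeasure M3 (Pair y -` (Pair x -` A)) \<partial>M2 \<partial>M1)"
    using A by (intro nn_integral_cong M3.emeasure_pair_measure_alt) (simp add: measurable_Pair2)
  also have "\<dots> = (\<integral>\<^sup>+p. emeasure M3 (Pair p -` (?assoc -` A \<inter> space ?M123)) \<partial>(M1 \<Otimes>\<^sub>M M2))"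
    using sets.sets_into_space[OF A]
    by (subst M2.nn_integral_fst[OF M3.measurable_emeasure_Pair[OF A'], symmetric])
       (auto simp: space_pair_measure intro!: nn_integral_cong arg_cong[where f="emeasure M3"])
  also have "\<dots> = emeasure ?M123 (?assoc -` A \<inter> space ?M123)"
    using A' by (rule M3.emeasure_pair_measure_alt[symmetric])
  also have "\<dots> = emeasure (distr ?M123 ?M1_23 ?assoc) A"
    using A assoc by (simp add: emeasure_distr)
  finally show "emeasure ?M1_23 A = emeasure (distr ?M123 ?M1_23 ?assoc) A" .
qed simp

lemma indep_var_fst_snd:
  assumes "prob_space Q" "prob_space P" and f: "f \<in> Q \<rightarrow>\<^sub>M S" and g: "g \<in> P \<rightarrow>\<^sub>M T"
  shows "prob_space.indep_var (Q \<Otimes>\<^sub>M P) S (\<lambda>p. f (fst p)) T (\<lambda>p. g (snd p))"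
proof -
  interpret Q: prob_space Q by fact
  interpret P: prob_space P by fact
  interpret QP: pair_prob_space Q P by unfold_locales
  have "distr (Q \<Otimes>\<^sub>M P) S (\<lambda>p. f (fst p)) = distr Q S f"
    using f by (simp add: distr_distr[symmetric, unfolded comp_def] P.distr_pair_fst)
  moreover have "distr (Q \<Otimes>\<^sub>M P) T (\<lambda>p. g (snd p)) = distr P T g"
    using g by (simp add: distr_distr[symmetric, unfolded comp_def]
                          Q.distr_pair_snd P.sigma_finite_measure_axioms)
  moreover have "distr Q S f \<Otimes>\<^sub>M distr P T g = distr (Q \<Otimes>\<^sub>M P) (S \<Otimes>\<^sub>M T) (\<lambda>(x, y). (f x, g y))"
    using f g by (intro pair_measure_distr prob_space_imp_sigma_finite P.prob_space_distr)
  ultimately show ?thesis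
    using f g by (simp add: QP.P.indep_var_distribution_eq case_prod_beta')
qed

lemma (in prob_space) distr_add_indep:
  fixes X Y :: "'a \<Rightarrow> 'b::euclidean_space"
  assumes "indep_var borel X borel Y"
  shows "distr M borel (\<lambda>x. X x + Y x) =
    distr (distr M borel X \<Otimes>\<^sub>M distr M borel Y) borel (\<lambda>(x, y). x + y)"
proof -
  have "X \<in> borel_measurable M" "Y \<in> borel_measurable M"
    and "distr M borel X \<Otimes>\<^sub>M distr M borel Y = distr M (borel \<Otimes>\<^sub>M borel) (\<lambda>x. (X x, Y x))"
    using assms by (simp_all add: indep_var_distribution_eq)
  then show ?thesis
    by (simp add: distr_distr comp_def)
qed

lemma distr_pair_regroup:
  assumes "prob_space L" "prob_space Q" "prob_space P"
    and [measurable]: "f \<in> L \<Otimes>\<^sub>M Q \<rightarrow>\<^sub>M X" "h \<in> Q \<Otimes>\<^sub>M P \<rightarrow>\<^sub>M N"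
      "g \<in> L \<Otimes>\<^sub>M N \<rightarrow>\<^sub>M R" "s \<in> X \<Otimes>\<^sub>M P \<rightarrow>\<^sub>M R"
    and eq: "\<And>u z y. u \<in> space L \<Longrightarrow> z \<in> space Q \<Longrightarrow> y \<in> space P \<Longrightarrow>
               s (f (u, z), y) = g (u, h (z, y))"
  shows "distr (distr (L \<Otimes>\<^sub>M Q) X f \<Otimes>\<^sub>M P) R s = distr (L \<Otimes>\<^sub>M distr (Q \<Otimes>\<^sub>M P) N h) R g"
proof -
  interpret L: prob_space L by fact
  interpret Q: prob_space Q by fact
  interpret P: prob_space P by fact
  interpret QP: pair_prob_space Q P by unfold_locales
  let ?assoc = "\<lambda>((u, z), y). (u, (z, y))"
  have [measurable]: "?assoc \<in> (L \<Otimes>\<^sub>M Q) \<Otimes>\<^sub>M P \<rightarrow>\<^sub>M L \<Otimes>\<^sub>M (Q \<Otimes>\<^sub>M P)"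
    by (simp add: case_prod_beta')
  have "distr (L \<Otimes>\<^sub>M Q) X f \<Otimes>\<^sub>M P = distr ((L \<Otimes>\<^sub>M Q) \<Otimes>\<^sub>M P) (X \<Otimes>\<^sub>M P) (\<lambda>(w, y). (f w, y))"
    using pair_measure_distr[of f "L \<Otimes>\<^sub>M Q" X "\<lambda>y. y" P P] P.sigma_finite_measure_axioms by simp
  then have "distr (distr (L \<Otimes>\<^sub>M Q) X f \<Otimes>\<^sub>M P) R s =
      distr ((L \<Otimes>\<^sub>M Q) \<Otimes>\<^sub>M P) R (\<lambda>(w, y). s (f w, y))"
    by (simp add: distr_distr comp_def case_prod_beta')
  also have "\<dots> = distr ((L \<Otimes>\<^sub>M Q) \<Otimes>\<^sub>M P) R (\<lambda>((u, z), y). g (u, h (z, y)))"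
    by (rule distr_cong) (auto simp: eq space_pair_measure)
  also have "\<dots> = distr (distr ((L \<Otimes>\<^sub>M Q) \<Otimes>\<^sub>M P) (L \<Otimes>\<^sub>M (Q \<Otimes>\<^sub>M P)) ?assoc) R (\<lambda>(u, w). g (u, h w))"
    by (simp add: distr_distr comp_def case_prod_beta')
  also have "\<dots> = distr (L \<Otimes>\<^sub>M (Q \<Otimes>\<^sub>M P)) R (\<lambda>(u, w). g (u, h w))"
    by (simp only: pair_measure_assoc[symmetric] L.sigma_finite_measure_axioms
                   Q.sigma_finite_measure_axioms P.sigma_finite_measure_axioms)
  also have "\<dots> = distr (distr (L \<Otimes>\<^sub>M (Q \<Otimes>\<^sub>M P)) (L \<Otimes>\<^sub>M N) (\<lambda>(u, w). (u, h w))) R g"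
    by (simp add: distr_distr comp_def case_prod_beta')
  also have "\<dots> = distr (L \<Otimes>\<^sub>M distr (Q \<Otimes>\<^sub>M P) N h) R g"
    using pair_measure_distr[of "\<lambda>u. u" L L h "Q \<Otimes>\<^sub>M P" N]
    by (simp add: prob_space_imp_sigma_finite QP.P.prob_space_distr)
  finally show ?thesis .
qed

lemma normal_rv_cong_distr:
  assumes "X \<in> borel_measurable M" "X' \<in> borel_measurable M'"
    and eq: "distr M borel X = distr M' borel X'"
  shows "normal_rv M X m v \<longleftrightarrow> normal_rv M' X' m v"
proof -
  have "(AE x in M. X x = m) \<longleftrightarrow> (AE y in distr M borel X. y = m)"
    using assms(1) by (simp add: AE_distr_iff)
  also have "\<dots> \<longleftrightarrow> (AE x in M'. X' x = m)"
    unfolding eq using assms(2) by (simp add: AE_distr_iff)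
  finally have "(AE x in M. X x = m) \<longleftrightarrow> (AE x in M'. X' x = m)" .
  moreover have "distr M lborel X = distr M' lborel X'"
    using eq by (metis distr_cong sets_lborel)
  ultimately show ?thesis
    using assms by (auto simp: normal_rv_def distributed_def)
qed

lemma normal_rv_distr_iff:
  assumes "f \<in> M \<rightarrow>\<^sub>M N" "X \<in> borel_measurable N"
  shows "normal_rv (distr M N f) X m v \<longleftrightarrow> normal_rv M (\<lambda>x. X (f x)) m v"
  using assms by (intro normal_rv_cong_distr) (auto simp: distr_distr comp_def)

lemma normal_rv_add_const:
  assumes "prob_space M" "normal_rv M X m v"
  shows "normal_rv M (\<lambda>x. X x + c) (m + c) v"
proof (cases "v > 0")
  case True
  interpret prob_space M by fact
  have "distributed M lborel X (\<lambda>x. ennreal (normal_density m (sqrt v) x))"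
    using assms(2) True by (auto simp: normal_rv_def)
  from normal_density_affine[OF this, of 1 c] True
  show ?thesis
    using assms(2) by (auto simp: normal_rv_def add.commute)
qed (use assms(2) in \<open>auto simp: normal_rv_def\<close>)

lemma normal_rv_add_AE_const:
  assumes "prob_space M" "normal_rv M X m v" "Y \<in> borel_measurable M" "AE x in M. Y x = c"
  shows "normal_rv M (\<lambda>x. X x + Y x) (m + c) v"
proof -
  have X: "X \<in> borel_measurable M"
    using assms(2) by (simp add: normal_rv_def)
  have "distr M borel (\<lambda>x. X x + c) = distr M borel (\<lambda>x. X x + Y x)"
    using assms(3,4) X by (intro distr_cong_AE) auto
  then show ?thesis
    using normal_rv_add_const[OF assms(1,2), of c] assms(3) X
      normal_rv_cong_distr[of "\<lambda>x. X x + c" M "\<lambda>x. X x + Y x" M]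
    by simp
qed

lemma normal_rv_add_indep:
  assumes "prob_space M" "prob_space.indep_var M borel X borel Y"
    and X: "normal_rv M X m1 v1" and Y: "normal_rv M Y m2 v2"
  shows "normal_rv M (\<lambda>x. X x + Y x) (m1 + m2) (v1 + v2)"
proof -
  interpret prob_space M by fact
  have mX: "X \<in> borel_measurable M" and mY: "Y \<in> borel_measurable M"
    using X Y by (simp_all add: normal_rv_def)
  consider "v1 > 0" "v2 > 0" | "v1 = 0" | "v2 = 0"
    using X Y by (auto simp: normal_rv_def)
  then show ?thesis
  proof cases
    case 1
    then have "distributed M lborel X (normal_density m1 (sqrt v1))"
      and "distributed M lborel Y (normal_density m2 (sqrt v2))"
      using X Y by (auto simp: normal_rv_def)
    from add_indep_normal[OF assms(2) _ _ this] 1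
    show ?thesis
      using mX mY by (simp add: normal_rv_def)
  next
    case 2
    then have "AE x in M. X x = m1"
      using X by (simp add: normal_rv_def)
    from normal_rv_add_AE_const[OF assms(1) Y mX this] 2
    show ?thesis by (simp add: add.commute)
  next
    case 3
    then have "AE x in M. Y x = m2"
      using Y by (simp add: normal_rv_def)
    from normal_rv_add_AE_const[OF assms(1) X mY this] 3
    show ?thesis by simp
  qed
qed

lemma borel_measurable_matrix_vector_mult [measurable]:
  "(\<lambda>x. (A::real^'n^'m) *v x) \<in> borel_measurable borel"
  by (intro borel_measurable_continuous_onI continuous_intros)

lemma quadratic_form_congruence:
  fixes K :: "real^'n^'m" and C :: "real^'n^'n"
  shows "(transpose K *v t) \<bullet> (C *v (transpose K *v t)) = t \<bullet> ((K ** C ** transpose K) *v t)"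
  by (simp add: dot_lmul_matrix matrix_vector_mul_assoc[symmetric])

lemma gaussian_law_affine_pair:
  fixes K :: "real^'n^'m" and D :: "real^'k^'m" and c :: "real^'m"
  assumes Q: "gaussian_law Q m1 C1" and P: "gaussian_law P m2 C2"
  shows "gaussian_law (distr (Q \<Otimes>\<^sub>M P) borel (\<lambda>(z, y). K *v z + D *v y + c))
           (K *v m1 + D *v m2 + c) (K ** C1 ** transpose K + D ** C2 ** transpose D)"
proof -
  have "prob_space Q" and [measurable_cong]: "sets Q = sets borel"
    and nQ: "\<And>t. normal_rv Q (\<lambda>x. t \<bullet> x) (t \<bullet> m1) (t \<bullet> (C1 *v t))"
    using Q by (auto simp: gaussian_law_def)
  have "prob_space P" and [measurable_cong]: "sets P = sets borel"
    and nP: "\<And>t. normal_rv P (\<lambda>x. t \<bullet> x) (t \<bullet> m2) (t \<bullet> (C2 *v t))"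
    using P by (auto simp: gaussian_law_def)
  interpret Q: prob_space Q by fact
  interpret P: prob_space P by fact
  interpret QP: pair_prob_space Q P by unfold_locales
  define F where "F = (\<lambda>(z, y). K *v z + D *v y + c)"
  have mF: "F \<in> borel_measurable (Q \<Otimes>\<^sub>M P)"
    unfolding F_def by measurable
  show ?thesis
    unfolding F_def[symmetric] gaussian_law_def
  proof (intro conjI allI)
    show "prob_space (distr (Q \<Otimes>\<^sub>M P) borel F)"
      using mF by (rule QP.P.prob_space_distr)
  next
    fix t :: "real^'m"
    let ?a = "transpose K *v t" and ?b = "transpose D *v t"
    have "normal_rv (Q \<Otimes>\<^sub>M P) (\<lambda>p. ?a \<bullet> fst p) (?a \<bullet> m1) (?a \<bullet> (C1 *v ?a))"
      using nQ[of ?a] normal_rv_distr_iff[of fst "Q \<Otimes>\<^sub>M P" Q "\<lambda>x. ?a \<bullet> x"]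
      by (simp add: P.distr_pair_fst)
    moreover have "normal_rv (Q \<Otimes>\<^sub>M P) (\<lambda>p. ?b \<bullet> snd p + t \<bullet> c)
                     (?b \<bullet> m2 + t \<bullet> c) (?b \<bullet> (C2 *v ?b))"
      using normal_rv_add_const[OF \<open>prob_space P\<close> nP[of ?b], of "t \<bullet> c"]
        normal_rv_distr_iff[of snd "Q \<Otimes>\<^sub>M P" P "\<lambda>x. ?b \<bullet> x + t \<bullet> c"]
      by (simp add: Q.distr_pair_snd P.sigma_finite_measure_axioms)
    moreover have "QP.P.indep_var borel (\<lambda>p. ?a \<bullet> fst p) borel (\<lambda>p. ?b \<bullet> snd p + t \<bullet> c)"
      using indep_var_fst_snd[of Q P "\<lambda>x. ?a \<bullet> x" borel "\<lambda>y. ?b \<bullet> y + t \<bullet> c" borel]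
      by (simp add: \<open>prob_space Q\<close> \<open>prob_space P\<close>)
    ultimately have "normal_rv (Q \<Otimes>\<^sub>M P) (\<lambda>p. ?a \<bullet> fst p + (?b \<bullet> snd p + t \<bullet> c))
        (?a \<bullet> m1 + (?b \<bullet> m2 + t \<bullet> c)) (?a \<bullet> (C1 *v ?a) + ?b \<bullet> (C2 *v ?b))"
      using normal_rv_add_indep QP.P.prob_space_axioms by blast
    then have "normal_rv (Q \<Otimes>\<^sub>M P) (\<lambda>p. t \<bullet> F p) (t \<bullet> (K *v m1 + D *v m2 + c))
        (t \<bullet> ((K ** C1 ** transpose K + D ** C2 ** transpose D) *v t))"
      unfolding quadratic_form_congruence
      by (simp add: F_def case_prod_beta' dot_lmul_matrix inner_add_right add.assoc
                    matrix_vector_mult_add_rdistrib)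
    then show "normal_rv (distr (Q \<Otimes>\<^sub>M P) borel F) (\<lambda>x. t \<bullet> x) (t \<bullet> (K *v m1 + D *v m2 + c))
        (t \<bullet> ((K ** C1 ** transpose K + D ** C2 ** transpose D) *v t))"
      using mF by (simp add: normal_rv_distr_iff)
  qed simp
qed

lemma (in prob_space) distr_add_indep_mixture:
  fixes Y1 Y2 :: "'a \<Rightarrow> real^'n"
  assumes "indep_var borel Y1 borel Y2"
    and "prob_space L" "sets L = sets borel" "prob_space Q" "sets Q = sets borel"
    and law_Y1: "distr M borel Y1 = distr (L \<Otimes>\<^sub>M Q) borel (\<lambda>(u, z). \<xi> + A *v (u *\<^sub>R \<delta> + z))"
    and "B ** B' = mat 1"
  shows "distr M borel (\<lambda>x. Y1 x + Y2 x) =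
    distr (L \<Otimes>\<^sub>M distr (Q \<Otimes>\<^sub>M distr M borel Y2) borel (\<lambda>(z, y). B' *v (A *v z + y - \<mu>))) borel
      (\<lambda>(u, w). (\<xi> + \<mu>) + B *v (u *\<^sub>R (B' *v (A *v \<delta>)) + w))"
    (is "_ = ?mixture")
proof -
  have [measurable_cong]: "sets L = sets borel" "sets Q = sets borel"
    by fact+
  have "Y2 \<in> borel_measurable M"
    using assms(1) by (simp add: indep_var_distribution_eq)
  then have "prob_space (distr M borel Y2)"
    by (rule prob_space_distr)
  have "distr M borel (\<lambda>x. Y1 x + Y2 x) =
      distr (distr (L \<Otimes>\<^sub>M Q) borel (\<lambda>(u, z). \<xi> + A *v (u *\<^sub>R \<delta> + z)) \<Otimes>\<^sub>M distr M borel Y2)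
        borel (\<lambda>(x, y). x + y)"
    using distr_add_indep[OF assms(1)] by (simp add: law_Y1)
  also have "\<dots> = ?mixture"
    by (rule distr_pair_regroup)
       (use assms \<open>prob_space (distr M borel Y2)\<close> in
         \<open>auto simp: algebra_simps matrix_vector_mul_assoc matrix_mul_assoc\<close>)
  finally show ?thesis .
qed

definition diag_mat :: "('n::finite \<Rightarrow> real) \<Rightarrow> real^'n^'n" where
  "diag_mat a = (\<chi> i j. if i = j then a i else 0)"

lemma diag_mat_mult_diag_mat [simp]: "diag_mat a ** diag_mat b = diag_mat (\<lambda>i. a i * b i)"
  by (simp add: diag_mat_def matrix_matrix_mult_def vec_eq_iff if_distrib[where f="\<lambda>x. x * _"]
           cong: if_cong)

lemma diag_mat_one: "diag_mat (\<lambda>i. 1) = mat 1"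
  by (simp add: diag_mat_def mat_def)

lemma diag_mat_mult_left [simp]: "(diag_mat a ** A) $ i $ j = a i * A $ i $ j"
  by (simp add: diag_mat_def matrix_matrix_mult_def if_distrib[where f="\<lambda>x. x * _"] cong: if_cong)

lemma diag_mat_mult_right [simp]: "(A ** diag_mat a) $ i $ j = A $ i $ j * a j"
  by (simp add: diag_mat_def matrix_matrix_mult_def if_distrib[where f="\<lambda>x. _ * x"] cong: if_cong)

lemma diag_mat_mult_vector [simp]: "(diag_mat a *v x) $ i = a i * x $ i"
  by (simp add: diag_mat_def matrix_vector_mult_def if_distrib[where f="\<lambda>x. x * _"] cong: if_cong)

lemma transpose_diag_mat [simp]: "transpose (diag_mat a) = diag_mat a"
  by (simp add: diag_mat_def transpose_def vec_eq_iff)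

lemma matrix_inv_inverse:
  fixes A :: "real^'n^'n"
  assumes "invertible A"
  shows "A ** matrix_inv A = mat 1" "matrix_inv A ** A = mat 1"
  using someI_ex[OF assms[unfolded invertible_def]] by (simp_all add: matrix_inv_def)

lemma invertible_matrix_inv:
  fixes A :: "real^'n^'n"
  assumes "invertible A"
  shows "invertible (matrix_inv A)"
  using matrix_inv_inverse[OF assms] by (auto simp: invertible_def)

lemma matrix_inv_eqI:
  fixes A :: "real^'n^'n"
  assumes AB: "A ** B = mat 1" and BA: "B ** A = mat 1"
  shows "matrix_inv A = B"
proof -
  have "invertible A"
    using AB BA by (auto simp: invertible_def)
  have "matrix_inv A = matrix_inv A ** (A ** B)"
    by (simp add: AB)
  also have "\<dots> = (matrix_inv A ** A) ** B"
    by (rule matrix_mul_assoc)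
  also have "\<dots> = B"
    by (simp add: matrix_inv_inverse[OF \<open>invertible A\<close>])
  finally show ?thesis .
qed

lemma matrix_inv_diag_mat:
  assumes "\<And>i. a i \<noteq> 0"
  shows "matrix_inv (diag_mat a) = diag_mat (\<lambda>i. inverse (a i))"
  by (rule matrix_inv_eqI) (simp_all add: assms diag_mat_one)

lemma omega_of_eq_diag_mat: "omega_of A = diag_mat (\<lambda>i. sqrt (A $ i $ i))"
  by (simp add: omega_of_def diag_mat_def hadamard_def mat_def vec_eq_iff)

lemma invertible_diag_mat:
  assumes "\<And>i. a i \<noteq> 0"
  shows "invertible (diag_mat a)"
  unfolding invertible_def
  by (rule exI[of _ "diag_mat (\<lambda>i. inverse (a i))"]) (simp add: assms diag_mat_one)

lemma outer_nth [simp]: "outer a b $ i $ j = a $ i * b $ j"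
  by (simp add: outer_def)

lemma pos_def_diag_pos:
  assumes "pos_def A"
  shows "A $ i $ i > 0"
proof -
  have "axis i 1 \<bullet> (A *v axis i 1) > 0"
    using assms by (simp add: pos_def_def axis_eq_0_iff)
  then show ?thesis
    by (simp add: inner_commute[of "axis i 1"] inner_axis matrix_vector_mult_basis column_def)
qed

lemma pos_def_sqrt_diag_neq_0:
  assumes "pos_def A"
  shows "sqrt (A $ i $ i) \<noteq> 0"
  using pos_def_diag_pos[OF assms, of i] by simp

lemma invertible_omega_of:
  assumes "pos_def A"
  shows "invertible (omega_of A)"
  unfolding omega_of_eq_diag_mat using pos_def_sqrt_diag_neq_0[OF assms] by (rule invertible_diag_mat)

lemma matrix_inv_omega_of:
  assumes "pos_def A"
  shows "matrix_inv (omega_of A) = diag_mat (\<lambda>i. inverse (sqrt (A $ i $ i)))"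
  unfolding omega_of_eq_diag_mat using pos_def_sqrt_diag_neq_0[OF assms] by (rule matrix_inv_diag_mat)

lemma Omega_bar_add_congruence:
  fixes \<Omega> \<Sigma> :: "real^'n^'n"
  assumes "pos_def \<Omega>" "pos_def (\<Omega> + \<Sigma>)"
  defines "W \<equiv> matrix_inv (omega_of (\<Omega> + \<Sigma>))"
  defines "K \<equiv> W ** omega_of \<Omega>"
  shows "K ** (Omega_bar \<Omega> - outer \<delta> \<delta>) ** transpose K + W ** \<Sigma> ** transpose W =
           Omega_bar (\<Omega> + \<Sigma>) - outer (K *v \<delta>) (K *v \<delta>)"
  unfolding K_def W_def Omega_bar_def matrix_inv_omega_of[OF assms(1)]
    matrix_inv_omega_of[OF assms(2)]
  unfolding omega_of_eq_diag_mat
  using pos_def_sqrt_diag_neq_0[OF assms(1)] pos_def_sqrt_diag_neq_0[OF assms(2)]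
  by (simp add: vec_eq_iff field_simps)

lemma transpose_add: "transpose (A + B) = transpose A + transpose (B::real^'n^'m)"
  by (simp add: transpose_def vec_eq_iff)

lemma pos_def_add_pos_semidef:
  assumes "pos_def A" "pos_semidef B"
  shows "pos_def (A + B)"
  using assms unfolding pos_def_def pos_semidef_def sym_matrix_def
  by (auto simp: transpose_add matrix_vector_mult_add_rdistrib inner_add_right add_pos_nonneg)

lemma pos_def_congruence:
  fixes K :: "real^'n^'n" and D :: "real^'k^'n"
  assumes "pos_def C1" "pos_semidef C2" "invertible K"
  shows "pos_def (K ** C1 ** transpose K + D ** C2 ** transpose D)"
proof -
  have "transpose C1 = C1" "transpose C2 = C2"
    using assms by (auto simp: pos_def_def pos_semidef_def sym_matrix_def)
  then have "sym_matrix (K ** C1 ** transpose K + D ** C2 ** transpose D)"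
    by (simp add: sym_matrix_def transpose_add matrix_transpose_mul matrix_mul_assoc)
  moreover have "x \<bullet> ((K ** C1 ** transpose K + D ** C2 ** transpose D) *v x) > 0" if "x \<noteq> 0" for x
  proof -
    have "transpose K *v x \<noteq> 0"
      using inj_matrix_vector_mult[OF transpose_invertible[OF assms(3)]] that
      by (metis injD matrix_vector_mult_0_right)
    then have "(transpose K *v x) \<bullet> (C1 *v (transpose K *v x)) > 0"
      using assms(1) by (simp add: pos_def_def)
    moreover have "(transpose D *v x) \<bullet> (C2 *v (transpose D *v x)) \<ge> 0"
      using assms(2) by (simp add: pos_semidef_def)
    ultimately show ?thesis
      unfolding matrix_vector_mult_add_rdistrib inner_add_right quadratic_form_congruence[symmetric]
      by linarith
  qed
  ultimately show ?thesis
    by (simp add: pos_def_def)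
qed

lemma gaussian_law_rescaled_sum:
  fixes \<Omega> \<Sigma> :: "real^'n^'n"
  assumes "pos_def \<Omega>" "pos_def (\<Omega> + \<Sigma>)"
    and "gaussian_law Q 0 (Omega_bar \<Omega> - outer \<delta> \<delta>)" "gaussian_law P \<mu> \<Sigma>"
  defines "W \<equiv> matrix_inv (omega_of (\<Omega> + \<Sigma>))"
  defines "\<delta>Y \<equiv> W *v (omega_of \<Omega> *v \<delta>)"
  shows "gaussian_law (distr (Q \<Otimes>\<^sub>M P) borel (\<lambda>(z, y). W *v (omega_of \<Omega> *v z + y - \<mu>))) 0
           (Omega_bar (\<Omega> + \<Sigma>) - outer \<delta>Y \<delta>Y)"
proof -
  have "(\<lambda>(z, y). W *v (omega_of \<Omega> *v z + y - \<mu>)) =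
      (\<lambda>(z, y). (W ** omega_of \<Omega>) *v z + W *v y + - (W *v \<mu>))"
    by (simp add: fun_eq_iff algebra_simps matrix_vector_mul_assoc)
  then show ?thesis
    using gaussian_law_affine_pair[OF assms(3,4), of "W ** omega_of \<Omega>" W "- (W *v \<mu>)"]
      Omega_bar_add_congruence[OF assms(1,2), of \<delta>]
    by (simp add: W_def \<delta>Y_def matrix_vector_mul_assoc)
qed

lemma pos_def_Omega_bar_add_sub_outer:
  fixes \<Omega> \<Sigma> :: "real^'n^'n"
  assumes "pos_def \<Omega>" "pos_semidef \<Sigma>" "pos_def (Omega_bar \<Omega> - outer \<delta> \<delta>)"
  defines "W \<equiv> matrix_inv (omega_of (\<Omega> + \<Sigma>))"
  defines "\<delta>Y \<equiv> W *v (omega_of \<Omega> *v \<delta>)"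
  shows "pos_def (Omega_bar (\<Omega> + \<Sigma>) - outer \<delta>Y \<delta>Y)"
proof -
  have "pos_def (\<Omega> + \<Sigma>)"
    using assms(1,2) by (rule pos_def_add_pos_semidef)
  then have "invertible (W ** omega_of \<Omega>)"
    using assms(1) unfolding W_def by (intro invertible_mult invertible_matrix_inv invertible_omega_of)
  with assms(2,3) show ?thesis
    using Omega_bar_add_congruence[OF assms(1) \<open>pos_def (\<Omega> + \<Sigma>)\<close>, of \<delta>] pos_def_congruence
    by (metis W_def \<delta>Y_def matrix_vector_mul_assoc)
qed

theorem theorem2:
  fixes M :: "'a measure"
    and Y1 Y2 :: "'a \<Rightarrow> real^'n"
    and \<xi> \<mu> \<delta> :: "real^'n"
    and \<Omega> \<Sigma> :: "real^'n^'n"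
    and H :: "real \<Rightarrow> real"
  assumes "prob_space M"
    and "pos_semidef \<Sigma>"
    and "is_MMN M Y1 \<xi> \<Omega> \<delta> H"
    and "is_normal_vec M Y2 \<mu> \<Sigma>"
    and "prob_space.indep_var M borel Y1 borel Y2"
  shows "is_MMN M (\<lambda>x. Y1 x + Y2 x) (\<xi> + \<mu>) (\<Omega> + \<Sigma>)
           (matrix_inv (omega_of (\<Omega> + \<Sigma>)) *v (omega_of \<Omega> *v \<delta>)) H"
proof -
  interpret M: prob_space M by fact
  let ?W = "matrix_inv (omega_of (\<Omega> + \<Sigma>))"
  let ?\<delta>Y = "?W *v (omega_of \<Omega> *v \<delta>)"
  have pos_\<Omega>: "pos_def \<Omega>" and pos_C: "pos_def (Omega_bar \<Omega> - outer \<delta> \<delta>)"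
    and Y1: "Y1 \<in> borel_measurable M"
    using assms(3) by (auto simp: is_MMN_def)
  obtain L Q where L: "prob_space L" "sets L = sets borel" "cdf L = H"
    and Q: "gaussian_law Q 0 (Omega_bar \<Omega> - outer \<delta> \<delta>)"
    and law_Y1: "distr M borel Y1 =
      distr (L \<Otimes>\<^sub>M Q) borel (\<lambda>(u, z). \<xi> + omega_of \<Omega> *v (u *\<^sub>R \<delta> + z))"
    using assms(3) unfolding is_MMN_def by blast
  have Y2: "Y2 \<in> borel_measurable M" and P: "gaussian_law (distr M borel Y2) \<mu> \<Sigma>"
    using assms(4) by (auto simp: is_normal_vec_def)
  have pos_\<Omega>\<Sigma>: "pos_def (\<Omega> + \<Sigma>)"
    using pos_\<Omega> assms(2) by (rule pos_def_add_pos_semidef)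
  define Q' where "Q' = distr (Q \<Otimes>\<^sub>M distr M borel Y2) borel
    (\<lambda>(z, y). ?W *v (omega_of \<Omega> *v z + y - \<mu>))"
  have "omega_of (\<Omega> + \<Sigma>) ** ?W = mat 1"
    using pos_\<Omega>\<Sigma> by (intro matrix_inv_inverse invertible_omega_of)
  with L Q have "distr M borel (\<lambda>x. Y1 x + Y2 x) = distr (L \<Otimes>\<^sub>M Q') borel
      (\<lambda>(u, w). (\<xi> + \<mu>) + omega_of (\<Omega> + \<Sigma>) *v (u *\<^sub>R ?\<delta>Y + w))"
    unfolding Q'_def
    by (intro M.distr_add_indep_mixture[OF assms(5) _ _ _ _ law_Y1]) (auto simp: gaussian_law_def)
  moreover have "gaussian_law Q' 0 (Omega_bar (\<Omega> + \<Sigma>) - outer ?\<delta>Y ?\<delta>Y)"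
    unfolding Q'_def using pos_\<Omega> pos_\<Omega>\<Sigma> Q P by (rule gaussian_law_rescaled_sum)
  ultimately show ?thesis
    using pos_\<Omega>\<Sigma> Y1 Y2 L pos_def_Omega_bar_add_sub_outer[OF pos_\<Omega> assms(2) pos_C]
    unfolding is_MMN_def by (intro conjI exI[of _ L] exI[of _ Q']) (auto simp: gaussian_law_def)
qed

end
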